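(* Let $N\equiv 3\pmod 4$ be a prime, let $C\in M_2(\mathbb Z)$ with $c:=\det C\neq 0$ and $(c,N)=1$. Choose integers $s,t$ with $sN+tc=1$ and put $X=tc\cdot C^{-1}$. Then for all $Q,T\in\mathscr S$, \[ K(Q,T;NC)=K(XQX^T,T;NI)\,K(s^2Q,T;C). \]
   Context: $\mathscr S$ is the set of symmetric positive definite half-integral $2\times2$ matrices with integral diagonal, $\Lambda$ the set of symmetric integral $2\times 2$ matrices, $I$ the $2\times 2$ identity. For $C'\in M_2(\mathbb Z)$ with $\det C'\neq 0$, $K(Q,T;C')=\sum_De(\mathrm{tr}(AC'^{-1}Q+C'^{-1}DT))$, where $D$ runs over $\{D\in M_2(\mathbb Z)\bmod C'\Lambda:\exists\begin{pmatrix}*&*\\C'&D\end{pmatrix}\in\mathrm{Sp}_4(\mathbb Z)\}$ and $A$ is any matrix with $\begin{pmatrix}A&*\\C'&D\end{pmatrix}\in\mathrm{Sp}_4(\mathbb Z)$; $e(x)=e^{2\pi ix}$. Note $X=t\cdot\mathrm{adj}(C)$ is integral. *)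

theory Defs
  imports "HOL-Analysis.Analysis"
begin

type_synonym imat = "int^2^2"
type_synonym rmat = "real^2^2"

definition rmat :: "imat \<Rightarrow> rmat" where
  "rmat C = (\<chi> i j. real_of_int (C$i$j))"

definition iscale :: "int \<Rightarrow> imat \<Rightarrow> imat" where
  "iscale k C = (\<chi> i j. k * C$i$j)"

definition e :: "real \<Rightarrow> complex" where
  "e x = exp (2 * of_real pi * \<i> * of_real x)"

definition Lambda :: "imat set" where
  "Lambda = {S. transpose S = S}"

text \<open>The 4x4 block matrix (A B; C D) lies in Sp_4(Z), i.e. M^T J M = J with
  J = (0 I; -I 0), written out blockwise.\<close>
definition symp4 :: "imat \<Rightarrow> imat \<Rightarrow> imat \<Rightarrow> imat \<Rightarrow> bool" where
  "symp4 A B C D \<longleftrightarrow>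
     transpose A ** C = transpose C ** A \<and>
     transpose B ** D = transpose D ** B \<and>
     transpose A ** D - transpose C ** B = mat 1"

definition Dset :: "imat \<Rightarrow> imat set" where
  "Dset C' = {D. \<exists>A B. symp4 A B C' D}"

definition Drel :: "imat \<Rightarrow> (imat \<times> imat) set" where
  "Drel C' = {(D, D'). D \<in> Dset C' \<and> D' \<in> Dset C' \<and> (\<exists>S\<in>Lambda. D' = D + C' ** S)}"

text \<open>The Kloosterman sum K(Q,T;C'): sum over the classes of admissible D modulo
  C' Lambda, with a chosen representative D of each class and a chosen A completing
  (C', D) to a symplectic matrix (the summand does not depend on these choices).\<close>
definition Kl :: "rmat \<Rightarrow> rmat \<Rightarrow> imat \<Rightarrow> complex" where
  "Kl Q T C' = (\<Sum>cl \<in> Dset C' // Drel C'.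
      let D = (SOME D. D \<in> cl);
          A = (SOME A. \<exists>B. symp4 A B C' D);
          Ci = matrix_inv (rmat C')
      in e (trace (rmat A ** Ci ** Q + Ci ** rmat D ** T)))"

definition Sset :: "rmat set" where
  "Sset = {Q. transpose Q = Q \<and> (\<forall>i. Q$i$i \<in> \<int>) \<and> (\<forall>i j. 2 * Q$i$j \<in> \<int>) \<and>
              (\<forall>x. x \<noteq> 0 \<longrightarrow> x \<bullet> (Q *v x) > 0)}"

end

theory Submission
  imports Defs
begin

text \<open>
  Write \<open>c = det C\<close> and \<open>J = adj C\<close>, so that \<open>JC = CJ = cI\<close> and \<open>C\<^sup>-\<^sup>1 = J/c\<close>. For
  \<open>det C' \<noteq> 0\<close> a pair \<open>(C', D)\<close> is the bottom row of a symplectic matrix with top row \<open>(A, B)\<close>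
  iff \<open>AJ'\<close> and \<open>J'D\<close> are symmetric and \<open>B = (AJ'D - J'\<^sup>T)/det C'\<close>; the summand of
  \<open>K(Q,T;C')\<close> is then \<open>e((tr(AJ'Q) + tr(J'DT))/det C')\<close>, and the half-integrality of \<open>Q\<close> and
  \<open>T\<close> makes it independent of the choices of \<open>A\<close> and of \<open>D\<close> in its class.

  Since \<open>sN + tc = 1\<close>, a Chinese remainder argument shows that \<open>D \<mapsto> (tJD, sD)\<close> maps the
  classes modulo \<open>NC\<Lambda>\<close> bijectively onto pairs of classes modulo \<open>N\<Lambda>\<close> and modulo \<open>C\<Lambda>\<close>, with
  inverse \<open>(D\<^sub>1, D\<^sub>2) \<mapsto> ND\<^sub>2 + CD\<^sub>1\<close>; a completion \<open>A\<close> of \<open>(NC, D)\<close> yields the completions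
  \<open>A\<^sup>TC\<close> and \<open>NA\<close> of the two factors. With \<open>\<alpha> = tr(AJQ)\<close> and \<open>\<beta> = tr(JDT)\<close> the three
  exponents are \<open>(\<alpha> + \<beta>)/(Nc)\<close>, \<open>(t\<^sup>2c\<alpha> + t\<beta>)/N\<close> (this is where \<open>X = tJ\<close> enters) and
  \<open>(Ns\<^sup>2\<alpha> + s\<beta>)/c\<close>; as \<open>(sN + tc)\<^sup>2 = 1\<close>, the first is the sum of the other two plus the
  integer \<open>2st\<alpha>\<close>.
\<close>

section \<open>Integral \<open>2 \<times> 2\<close> matrices\<close>

definition adjugate :: "imat \<Rightarrow> imat" where
  "adjugate M = (\<chi> i j. if i = 1 \<and> j = 1 then M$2$2 else if i = 1 \<and> j = 2 then - M$1$2
      else if i = 2 \<and> j = 1 then - M$2$1 else M$1$1)"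

lemma mat2_eqI:
  "(A::'a^2^2)$1$1 = B$1$1 \<Longrightarrow> A$1$2 = B$1$2 \<Longrightarrow> A$2$1 = B$2$1 \<Longrightarrow> A$2$2 = B$2$2 \<Longrightarrow> A = B"
  by (simp add: vec_eq_iff forall_2)

lemma matrix_matrix_mult_2: "((A::'a::semiring_1^2^2) ** B)$i$j = A$i$1 * B$1$j + A$i$2 * B$2$j"
  by (simp add: matrix_matrix_mult_def sum_2)

lemma adjugate_nth:
  "adjugate M$1$1 = M$2$2" "adjugate M$1$2 = - M$1$2" "adjugate M$2$1 = - M$2$1" "adjugate M$2$2 = M$1$1"
  by (simp_all add: adjugate_def)

lemma iscale_nth: "iscale k M $i$j = k * M$i$j"
  by (simp add: iscale_def)

lemma mat_nth: "(mat k :: 'a::zero^'n^'n)$i$j = (if i = j then k else 0)"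
  by (simp add: mat_def)

lemma transpose_nth: "transpose M $i$j = M$j$i"
  by (simp add: transpose_def)

lemmas mat2_nth = matrix_matrix_mult_2 adjugate_nth iscale_nth mat_nth transpose_nth

lemma matrix_mult_adjugate: "M ** adjugate M = mat (det M)"
  by (rule mat2_eqI) (simp_all add: mat2_nth det_2 algebra_simps)

lemma adjugate_mult: "adjugate M ** M = mat (det M)"
  by (rule mat2_eqI) (simp_all add: mat2_nth det_2 algebra_simps)

lemma transpose_adjugate_mult: "transpose (adjugate M) ** transpose M = mat (det M)"
  by (metis matrix_mult_adjugate matrix_transpose_mul transpose_mat)

lemma transpose_mult_adjugate: "transpose M ** transpose (adjugate M) = mat (det M)"
  by (metis adjugate_mult matrix_transpose_mul transpose_mat)

lemma adjugate_iscale: "adjugate (iscale k M) = iscale k (adjugate M)"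
  by (rule mat2_eqI) (simp_all add: mat2_nth)

lemma adjugate_mat: "adjugate (mat k) = mat k"
  by (rule mat2_eqI) (simp_all add: mat2_nth)

lemma det_iscale: "det (iscale k M) = k\<^sup>2 * det M"
  by (simp add: det_2 iscale_nth power2_eq_square algebra_simps)

lemma det_mat_2: "det (mat k :: imat) = k\<^sup>2"
  by (simp add: det_2 mat_nth power2_eq_square)

lemma iscale_mult_left [simp]: "iscale k A ** B = iscale k (A ** B)"
  by (rule mat2_eqI) (simp_all add: mat2_nth algebra_simps)

lemma iscale_mult_right [simp]: "A ** iscale k B = iscale k (A ** B)"
  by (rule mat2_eqI) (simp_all add: mat2_nth algebra_simps)

lemma iscale_iscale [simp]: "iscale a (iscale b M) = iscale (a * b) M"
  by (rule mat2_eqI) (simp_all add: mat2_nth)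

lemma transpose_iscale [simp]: "transpose (iscale k M) = iscale k (transpose M)"
  by (rule mat2_eqI) (simp_all add: mat2_nth)

lemma iscale_1 [simp]: "iscale 1 A = A"
  by (rule mat2_eqI) (simp_all add: mat2_nth)

lemma iscale_mat [simp]: "iscale k (mat m) = mat (k * m)"
  by (rule mat2_eqI) (simp_all add: mat2_nth)

lemma mat_mult_left [simp]: "mat k ** (A::imat) = iscale k A"
  by (rule mat2_eqI) (simp_all add: mat2_nth)

lemma mat_mult_right [simp]: "(A::imat) ** mat k = iscale k A"
  by (rule mat2_eqI) (simp_all add: mat2_nth)

lemma iscale_add: "iscale k (A + B) = iscale k A + iscale k B"
  by (rule mat2_eqI) (simp_all add: mat2_nth algebra_simps)

lemma iscale_diff: "iscale k (A - B) = iscale k A - iscale k B"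
  by (rule mat2_eqI) (simp_all add: mat2_nth algebra_simps)

lemma iscale_add_left: "iscale (a + b) A = iscale a A + iscale b A"
  by (rule mat2_eqI) (simp_all add: mat2_nth algebra_simps)

lemma iscale_cancel: "k \<noteq> 0 \<Longrightarrow> iscale k A = iscale k B \<Longrightarrow> A = B"
  by (simp add: iscale_def vec_eq_iff)

lemma matrix_add_rdistrib: "((B::imat) + C) ** (A::imat) = B ** A + C ** A"
  by (rule mat2_eqI) (simp_all add: mat2_nth algebra_simps)

lemma matrix_diff_ldistrib: "(A::imat) ** (B - C::imat) = A ** B - A ** C"
  by (rule mat2_eqI) (simp_all add: mat2_nth algebra_simps)

lemma matrix_diff_rdistrib: "((B::imat) - C) ** (A::imat) = B ** A - C ** A"
  by (rule mat2_eqI) (simp_all add: mat2_nth algebra_simps)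

lemma transpose_add [simp]: "transpose ((A::imat) + B) = transpose A + transpose B"
  by (rule mat2_eqI) (simp_all add: mat2_nth)

lemma transpose_diff [simp]: "transpose ((A::imat) - B) = transpose A - transpose B"
  by (rule mat2_eqI) (simp_all add: mat2_nth)

lemma transpose_uminus [simp]: "transpose (- (A::imat)) = - transpose A"
  by (rule mat2_eqI) (simp_all add: mat2_nth)

lemma matrix_mult_uminus_right: "(A::imat) ** (- B::imat) = - (A ** B)"
  by (rule mat2_eqI) (simp_all add: mat2_nth algebra_simps)

lemma adjugate_mult_assoc: "X ** adjugate C ** C = iscale (det C) X"
  by (metis adjugate_mult matrix_mul_assoc mat_mult_right)

lemma mult_adjugate_assoc: "X ** C ** adjugate C = iscale (det C) X"
  by (metis matrix_mult_adjugate matrix_mul_assoc mat_mult_right)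

lemma in_Lambda_iff: "S \<in> Lambda \<longleftrightarrow> transpose S = S"
  by (simp add: Lambda_def)

lemma Lambda_iscale: "S \<in> Lambda \<Longrightarrow> iscale k S \<in> Lambda"
  by (simp add: in_Lambda_iff)

lemma Lambda_iscale_cancel: "k \<noteq> 0 \<Longrightarrow> iscale k S \<in> Lambda \<Longrightarrow> S \<in> Lambda"
  by (auto simp: in_Lambda_iff intro: iscale_cancel)

lemma Lambda_add: "S \<in> Lambda \<Longrightarrow> S' \<in> Lambda \<Longrightarrow> S + S' \<in> Lambda"
  by (simp add: in_Lambda_iff)

lemma Lambda_diff: "S \<in> Lambda \<Longrightarrow> S' \<in> Lambda \<Longrightarrow> S - S' \<in> Lambda"
  by (simp add: in_Lambda_iff)

lemma Lambda_congruence: "S \<in> Lambda \<Longrightarrow> transpose X ** S ** X \<in> Lambda"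
  by (simp add: in_Lambda_iff matrix_transpose_mul matrix_mul_assoc)

lemma mult_in_Lambda_iff: "A ** B \<in> Lambda \<longleftrightarrow> transpose B ** transpose A = A ** B"
  by (simp add: in_Lambda_iff matrix_transpose_mul)

section \<open>Bottom rows of integral symplectic matrices\<close>

lemma symp4_adjugateD:
  assumes "symp4 A B C D" "det C \<noteq> 0"
  shows "A ** adjugate C \<in> Lambda" "adjugate C ** D \<in> Lambda"
    "iscale (det C) B = A ** adjugate C ** D - transpose (adjugate C)"
proof -
  let ?J = "adjugate C" and ?c = "det C"
  have E1: "transpose A ** C = transpose C ** A" and E2: "transpose B ** D = transpose D ** B"
    and E3: "transpose A ** D - transpose C ** B = mat 1"
    using assms(1) by (auto simp: symp4_def)
  have "iscale ?c (transpose ?J ** transpose A) = transpose ?J ** (transpose A ** C) ** ?J"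
    by (simp add: mult_adjugate_assoc matrix_mul_assoc)
  also have "\<dots> = iscale ?c (A ** ?J)"
    by (simp add: E1 matrix_mul_assoc transpose_adjugate_mult)
  finally have "transpose ?J ** transpose A = A ** ?J"
    by (rule iscale_cancel[OF assms(2)])
  then show AJ: "A ** ?J \<in> Lambda" by (simp add: mult_in_Lambda_iff)
  have "transpose ?J ** (transpose A ** D - transpose C ** B) = transpose ?J"
    by (simp add: E3)
  then have "transpose ?J ** transpose A ** D - iscale ?c B = transpose ?J"
    by (simp add: matrix_diff_ldistrib matrix_mul_assoc transpose_adjugate_mult)
  then show B: "iscale ?c B = A ** ?J ** D - transpose ?J"
    using AJ by (simp add: mult_in_Lambda_iff algebra_simps)
  have BD: "iscale ?c (transpose B ** D) = transpose D ** (A ** ?J) ** D - ?J ** D"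
  proof -
    have "iscale ?c (transpose B ** D) = transpose (iscale ?c B) ** D" by simp
    also have "\<dots> = transpose D ** transpose (A ** ?J) ** D - ?J ** D"
      by (simp add: B matrix_transpose_mul matrix_diff_rdistrib matrix_mul_assoc)
    finally show ?thesis using AJ by (simp add: in_Lambda_iff)
  qed
  have "?J ** D = transpose D ** (A ** ?J) ** D - iscale ?c (transpose B ** D)"
    using BD by (simp add: algebra_simps)
  moreover have "transpose \<dots> = \<dots>"
    using AJ E2 by (simp add: in_Lambda_iff matrix_transpose_mul matrix_mul_assoc)
  ultimately show "?J ** D \<in> Lambda" by (simp add: in_Lambda_iff)
qed

lemma symp4_adjugateI:
  assumes "det C \<noteq> 0" "A ** adjugate C \<in> Lambda" "adjugate C ** D \<in> Lambda"
    "iscale (det C) B = A ** adjugate C ** D - transpose (adjugate C)"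
  shows "symp4 A B C D"
proof -
  let ?J = "adjugate C" and ?c = "det C"
  have JA: "transpose ?J ** transpose A = A ** ?J"
    using assms(2) by (simp add: mult_in_Lambda_iff)
  have "iscale ?c (transpose A ** C) = transpose C ** (transpose ?J ** transpose A) ** C"
    by (simp add: matrix_mul_assoc transpose_mult_adjugate)
  also have "\<dots> = iscale ?c (transpose C ** A)"
    by (simp add: JA matrix_mul_assoc adjugate_mult_assoc)
  finally have E1: "transpose A ** C = transpose C ** A"
    by (rule iscale_cancel[OF assms(1)])
  have "iscale ?c (transpose A ** D - transpose C ** B)
      = iscale ?c (transpose A ** D) - transpose C ** (A ** ?J ** D - transpose ?J)"
    by (simp add: iscale_diff flip: assms(4))
  also have "\<dots> = iscale ?c (transpose A ** D) - (transpose A ** C) ** ?J ** D + mat ?c"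
    by (simp add: matrix_diff_ldistrib matrix_mul_assoc E1 transpose_mult_adjugate)
  also have "\<dots> = iscale ?c (mat 1)"
    by (simp add: matrix_mult_adjugate flip: matrix_mul_assoc)
  finally have E3: "transpose A ** D - transpose C ** B = mat 1"
    by (rule iscale_cancel[OF assms(1)])
  have "iscale ?c (transpose B ** D) = transpose (iscale ?c B) ** D" by simp
  also have "\<dots> = transpose D ** (A ** ?J) ** D - ?J ** D"
    using assms(2) by (simp add: assms(4) in_Lambda_iff matrix_transpose_mul matrix_diff_rdistrib
        matrix_mul_assoc)
  finally have "iscale ?c (transpose B ** D) \<in> Lambda"
    using assms(2,3) by (simp add: in_Lambda_iff matrix_transpose_mul matrix_mul_assoc)
  then have "transpose B ** D \<in> Lambda" by (rule Lambda_iscale_cancel[OF assms(1)])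
  then have E2: "transpose B ** D = transpose D ** B" by (simp add: mult_in_Lambda_iff)
  show ?thesis unfolding symp4_def by (intro conjI E1 E2 E3)
qed

lemma symp4_transpose_identity:
  assumes "symp4 A B C D" "det C \<noteq> 0"
  shows "D ** transpose A - C ** transpose B = mat 1"
proof -
  let ?J = "adjugate C" and ?c = "det C"
  note adj = symp4_adjugateD[OF assms]
  have JD: "?J ** D = transpose D ** transpose ?J"
    using adj(2) by (simp add: mult_in_Lambda_iff)
  have "iscale ?c (B ** transpose C) = A ** (?J ** D) ** transpose C - transpose ?J ** transpose C"
    by (simp add: adj(3) matrix_diff_rdistrib matrix_mul_assoc flip: iscale_mult_left)
  also have "\<dots> = iscale ?c (A ** transpose D - mat 1)"
    by (simp add: JD matrix_mul_assoc transpose_adjugate_mult iscale_diff flip: matrix_mul_assoc)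
  finally have "B ** transpose C = A ** transpose D - mat 1"
    by (rule iscale_cancel[OF assms(2)])
  then have "transpose (B ** transpose C) = transpose (A ** transpose D - mat 1)" by simp
  then show ?thesis by (simp add: matrix_transpose_mul algebra_simps)
qed

lemma symp4_shift:
  assumes "symp4 A B C D" "det C \<noteq> 0" "S \<in> Lambda"
  shows "symp4 A (B + A ** S) C (D + C ** S)"
proof -
  let ?J = "adjugate C" and ?c = "det C"
  note adj = symp4_adjugateD[OF assms(1,2)]
  have JD: "?J ** (D + C ** S) = ?J ** D + iscale ?c S"
    by (simp add: matrix_add_ldistrib matrix_mul_assoc adjugate_mult)
  show ?thesis
  proof (rule symp4_adjugateI[OF assms(2) adj(1)])
    show "?J ** (D + C ** S) \<in> Lambda"
      unfolding JD using adj(2) assms(3) by (intro Lambda_add Lambda_iscale)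
    show "iscale ?c (B + A ** S) = A ** ?J ** (D + C ** S) - transpose ?J"
      by (simp add: iscale_add adj(3) matrix_add_ldistrib matrix_mul_assoc adjugate_mult_assoc
          algebra_simps)
  qed
qed

lemma symp4_completion_unique:
  assumes "symp4 A B C D" "symp4 A' B' C D" "det C \<noteq> 0"
  obtains W where "W \<in> Lambda" "A' ** adjugate C = A ** adjugate C + iscale (det C) W"
proof -
  let ?J = "adjugate C" and ?c = "det C"
  note adj = symp4_adjugateD[OF assms(1,3)] and adj' = symp4_adjugateD[OF assms(2,3)]
  define W where "W = (B' - B) ** transpose A - (A' - A) ** transpose B"
  have XJD: "(A' - A) ** ?J ** D = iscale ?c (B' - B)"
    using adj(3) adj'(3) by (simp add: matrix_diff_rdistrib iscale_diff)
  have "(A' - A) ** ?J = (A' - A) ** ?J ** (D ** transpose A - C ** transpose B)"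
    using symp4_transpose_identity[OF assms(1,3)] by simp
  also have "\<dots> = ((A' - A) ** ?J ** D) ** transpose A - ((A' - A) ** ?J ** C) ** transpose B"
    by (simp add: matrix_diff_ldistrib matrix_mul_assoc)
  also have "\<dots> = iscale ?c W"
    by (simp only: XJD adjugate_mult_assoc) (simp add: W_def iscale_diff matrix_diff_rdistrib)
  finally have XJ: "(A' - A) ** ?J = iscale ?c W" .
  then have "iscale ?c W \<in> Lambda"
    using adj(1) adj'(1) by (metis Lambda_diff matrix_diff_rdistrib)
  then have "W \<in> Lambda" by (rule Lambda_iscale_cancel[OF assms(3)])
  moreover have "A' ** ?J = A ** ?J + iscale ?c W"
    using XJ by (simp add: matrix_diff_rdistrib algebra_simps)
  ultimately show ?thesis by (rule that)
qed

lemma symp4_matD: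
  assumes "symp4 A B (mat N) D" "N \<noteq> 0"
  shows "A \<in> Lambda" "D \<in> Lambda" "A ** D = iscale N B + mat 1"
proof -
  have dN: "det (mat N :: imat) \<noteq> 0" using assms(2) by (simp add: det_mat_2)
  note adj = symp4_adjugateD[OF assms(1) dN]
  show "A \<in> Lambda" "D \<in> Lambda"
    using adj(1,2) assms(2) by (simp_all add: adjugate_mat Lambda_iscale_cancel)
  have "iscale N (iscale N B) = iscale N (A ** D - mat 1)"
    using adj(3) by (simp add: adjugate_mat det_mat_2 iscale_diff power2_eq_square)
  then have "iscale N B = A ** D - mat 1" by (rule iscale_cancel[OF assms(2)])
  then show "A ** D = iscale N B + mat 1" by (simp add: algebra_simps)
qed

section \<open>The summands of the Kloosterman sum\<close>

lemma rmat_nth: "rmat M $ i $ j = real_of_int (M$i$j)"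
  by (simp add: rmat_def)

lemma rmat_mult: "rmat (A ** B) = rmat A ** rmat B"
  by (rule mat2_eqI) (simp_all add: rmat_nth matrix_matrix_mult_2)

lemma rmat_iscale: "rmat (iscale k M) = of_int k *\<^sub>R rmat M"
  by (rule mat2_eqI) (simp_all add: rmat_nth iscale_nth)

lemma matrix_inv_eqI:
  fixes A B :: "'a::semiring_1^'n^'n"
  assumes "A ** B = mat 1" "B ** A = mat 1"
  shows "matrix_inv A = B"
proof -
  have "A ** matrix_inv A = mat 1 \<and> matrix_inv A ** A = mat 1"
    unfolding matrix_inv_def by (rule someI[of _ B]) (use assms in auto)
  then show ?thesis
    by (metis assms(1) matrix_mul_assoc matrix_mul_lid matrix_mul_rid)
qed

lemma matrix_inv_rmat:
  assumes "det C \<noteq> 0"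
  shows "matrix_inv (rmat C) = (1 / of_int (det C)) *\<^sub>R rmat (adjugate C)"
proof (rule matrix_inv_eqI)
  let ?k = "1 / real_of_int (det C)"
  have inv: "?k *\<^sub>R rmat (mat (det C)) = mat 1"
    using assms by (intro mat2_eqI) (simp_all add: rmat_nth mat_nth)
  have "rmat C ** (?k *\<^sub>R rmat (adjugate C)) = ?k *\<^sub>R rmat (C ** adjugate C)"
    by (simp add: rmat_mult matrix_scalar_ac scalar_matrix_assoc)
  then show "rmat C ** (?k *\<^sub>R rmat (adjugate C)) = mat 1"
    using inv by (simp add: matrix_mult_adjugate)
  have "?k *\<^sub>R rmat (adjugate C) ** rmat C = ?k *\<^sub>R rmat (adjugate C ** C)"
    by (simp add: rmat_mult scalar_matrix_assoc)
  then show "?k *\<^sub>R rmat (adjugate C) ** rmat C = mat 1"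
    using inv by (simp add: adjugate_mult)
qed

definition trace_pairing :: "imat \<Rightarrow> rmat \<Rightarrow> real" where
  "trace_pairing M Q = trace (rmat M ** Q)"

lemma trace_pairing_2:
  "trace_pairing M Q = of_int (M$1$1) * Q$1$1 + of_int (M$1$2) * Q$2$1
    + of_int (M$2$1) * Q$1$2 + of_int (M$2$2) * Q$2$2"
  by (simp add: trace_pairing_def trace_def sum_2 matrix_matrix_mult_2 rmat_nth)

lemma trace_pairing_add: "trace_pairing (M + M') Q = trace_pairing M Q + trace_pairing M' Q"
  by (simp add: trace_pairing_2 algebra_simps)

lemma trace_pairing_iscale: "trace_pairing (iscale k M) Q = of_int k * trace_pairing M Q"
  by (simp add: trace_pairing_2 iscale_nth algebra_simps)

lemma trace_pairing_scaleR: "trace_pairing M (r *\<^sub>R Q) = r * trace_pairing M Q"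
  by (simp add: trace_pairing_2 algebra_simps)

lemma trace_pairing_congruence:
  "trace_pairing M (rmat X ** Q ** transpose (rmat X)) = trace_pairing (transpose X ** M ** X) Q"
  by (simp add: trace_pairing_2 matrix_matrix_mult_2 rmat_nth transpose_nth algebra_simps)

definition Lambda_dual :: "rmat set" where
  "Lambda_dual = {Q. \<forall>W\<in>Lambda. trace_pairing W Q \<in> \<int>}"

lemma Sset_subset_Lambda_dual: "Sset \<subseteq> Lambda_dual"
proof
  fix Q assume Q: "Q \<in> Sset"
  have Q12: "Q$1$2 = Q$2$1" using Q transpose_nth[of Q 2 1] by (simp add: Sset_def)
  have Qint: "Q$1$1 \<in> \<int>" "Q$2$2 \<in> \<int>" "2 * Q$1$2 \<in> \<int>" using Q by (auto simp: Sset_def)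
  have "trace_pairing W Q \<in> \<int>" if "W \<in> Lambda" for W
  proof -
    have "W$1$2 = W$2$1" using that transpose_nth[of W 2 1] by (simp add: in_Lambda_iff)
    then have "trace_pairing W Q = of_int (W$1$1) * Q$1$1 + of_int (W$2$1) * (2 * Q$1$2) + of_int (W$2$2) * Q$2$2"
      by (simp add: trace_pairing_2 Q12 algebra_simps)
    then show ?thesis using Qint by (simp add: Ints_add Ints_mult)
  qed
  then show "Q \<in> Lambda_dual" by (simp add: Lambda_dual_def)
qed

lemma Lambda_dual_scaleR: "r \<in> \<int> \<Longrightarrow> Q \<in> Lambda_dual \<Longrightarrow> r *\<^sub>R Q \<in> Lambda_dual"
  by (simp add: Lambda_dual_def trace_pairing_scaleR Ints_mult)

lemma Lambda_dual_congruence: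
  "Q \<in> Lambda_dual \<Longrightarrow> rmat X ** Q ** transpose (rmat X) \<in> Lambda_dual"
  by (simp add: Lambda_dual_def trace_pairing_congruence Lambda_congruence)

lemma e_add: "e (x + y) = e x * e y"
  by (simp add: e_def distrib_left distrib_right exp_add)

lemma e_add_Ints: "n \<in> \<int> \<Longrightarrow> e (x + n) = e x"
proof -
  assume "n \<in> \<int>"
  then obtain k where k: "n = of_int k" by (auto elim: Ints_cases)
  have "e n = exp ((2 * of_int k * pi) * \<i>)" by (simp add: e_def k mult_ac)
  also have "\<dots> = 1" by (rule exp_integer_2pi) simp
  finally show ?thesis by (simp add: e_add)
qed

definition kl_term :: "rmat \<Rightarrow> rmat \<Rightarrow> imat \<Rightarrow> imat \<Rightarrow> imat \<Rightarrow> complex" where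
  "kl_term Q T C' A D =
    e ((trace_pairing (A ** adjugate C') Q + trace_pairing (adjugate C' ** D) T) / of_int (det C'))"

lemma trace_Kl_exponent:
  assumes "det C \<noteq> 0"
  shows "trace (rmat A ** matrix_inv (rmat C) ** Q + matrix_inv (rmat C) ** rmat D ** T)
    = (trace_pairing (A ** adjugate C) Q + trace_pairing (adjugate C ** D) T) / of_int (det C)"
  using assms by (simp add: matrix_inv_rmat trace_pairing_2 trace_def sum_2 matrix_matrix_mult_2
      rmat_nth adjugate_nth field_simps)

lemma equiv_Drel: "equiv (Dset C') (Drel C')"
proof (rule equivI)
  show "refl_on (Dset C') (Drel C')"
    by (auto simp: refl_on_def Drel_def in_Lambda_iff transpose_def vec_eq_iff
        intro!: bexI[of _ "0::imat"])
  show "sym (Drel C')"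
  proof (rule symI)
    fix D D' assume "(D, D') \<in> Drel C'"
    then obtain S where "D \<in> Dset C'" "D' \<in> Dset C'" "S \<in> Lambda" "D' = D + C' ** S"
      by (auto simp: Drel_def)
    moreover have "- S \<in> Lambda" "D = D' + C' ** (- S)"
      using calculation by (auto simp: in_Lambda_iff matrix_mult_uminus_right)
    ultimately show "(D', D) \<in> Drel C'" unfolding Drel_def by blast
  qed
  show "trans (Drel C')"
  proof (rule transI)
    fix D D' D'' assume "(D, D') \<in> Drel C'" "(D', D'') \<in> Drel C'"
    then obtain S S' where "D \<in> Dset C'" "D'' \<in> Dset C'" "S \<in> Lambda" "S' \<in> Lambda"
      "D' = D + C' ** S" "D'' = D' + C' ** S'"
      by (auto simp: Drel_def)
    moreover have "S + S' \<in> Lambda" "D'' = D + C' ** (S + S')"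
      using calculation by (auto simp: Lambda_add matrix_add_ldistrib add.assoc)
    ultimately show "(D, D'') \<in> Drel C'" unfolding Drel_def by blast
  qed
  show "Drel C' \<subseteq> Dset C' \<times> Dset C'" by (auto simp: Drel_def)
qed

lemma DrelI:
  "D \<in> Dset C' \<Longrightarrow> D' \<in> Dset C' \<Longrightarrow> S \<in> Lambda \<Longrightarrow> D' = D + C' ** S \<Longrightarrow> (D, D') \<in> Drel C'"
  by (auto simp: Drel_def)

lemma kl_term_Drel_invariant:
  assumes "det C' \<noteq> 0" "Q \<in> Lambda_dual" "T \<in> Lambda_dual"
    and "symp4 A B C' D" "symp4 A' B' C' D'" "(D, D') \<in> Drel C'"
  shows "kl_term Q T C' A' D' = kl_term Q T C' A D"
proof -
  let ?J = "adjugate C'" and ?c = "det C'"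
  obtain S where S: "S \<in> Lambda" and D': "D' = D + C' ** S"
    using assms(6) by (auto simp: Drel_def)
  have "symp4 A (B + A ** S) C' D'"
    unfolding D' by (rule symp4_shift[OF assms(4,1) S])
  then obtain W where W: "W \<in> Lambda" "A' ** ?J = A ** ?J + iscale ?c W"
    using symp4_completion_unique assms(1,5) by blast
  have JD': "?J ** D' = ?J ** D + iscale ?c S"
    by (simp add: D' matrix_add_ldistrib matrix_mul_assoc adjugate_mult)
  have "(trace_pairing (A' ** ?J) Q + trace_pairing (?J ** D') T) / ?c
      = (trace_pairing (A ** ?J) Q + trace_pairing (?J ** D) T) / ?c
        + (trace_pairing W Q + trace_pairing S T)"
    using assms(1) by (simp add: W(2) JD' trace_pairing_add trace_pairing_iscale field_simps)
  moreover have "trace_pairing W Q + trace_pairing S T \<in> \<int>"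
    using assms(2,3) W(1) S by (auto simp: Lambda_dual_def)
  ultimately show ?thesis by (simp add: kl_term_def e_add_Ints)
qed

definition kl_class_term :: "rmat \<Rightarrow> rmat \<Rightarrow> imat \<Rightarrow> imat set \<Rightarrow> complex" where
  "kl_class_term Q T C' cl = (let D = (SOME D. D \<in> cl);
          A = (SOME A. \<exists>B. symp4 A B C' D);
          Ci = matrix_inv (rmat C')
      in e (trace (rmat A ** Ci ** Q + Ci ** rmat D ** T)))"

lemma Kl_eq_sum_kl_class_term: "Kl Q T C' = (\<Sum>cl \<in> Dset C' // Drel C'. kl_class_term Q T C' cl)"
  unfolding Kl_def kl_class_term_def ..

lemma kl_class_term_eq:
  assumes "det C' \<noteq> 0" "Q \<in> Lambda_dual" "T \<in> Lambda_dual" "symp4 A B C' D"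
  shows "kl_class_term Q T C' (Drel C' `` {D}) = kl_term Q T C' A D"
proof -
  define D0 where "D0 = (SOME D0. D0 \<in> Drel C' `` {D})"
  define A0 where "A0 = (SOME A. \<exists>B. symp4 A B C' D0)"
  have "D \<in> Dset C'" using assms(4) by (auto simp: Dset_def)
  then have "D0 \<in> Drel C' `` {D}"
    unfolding D0_def by (metis someI equiv_class_self[OF equiv_Drel])
  then have rel: "(D, D0) \<in> Drel C'" by simp
  then have "\<exists>A B. symp4 A B C' D0" by (simp add: Drel_def Dset_def)
  then obtain B0 where "symp4 A0 B0 C' D0"
    unfolding A0_def by (metis (mono_tags, lifting) someI_ex)
  then have "kl_term Q T C' A0 D0 = kl_term Q T C' A D"
    by (rule kl_term_Drel_invariant[OF assms _ rel])
  then show ?thesis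
    unfolding kl_class_term_def Let_def D0_def[symmetric] A0_def[symmetric]
    using assms(1) by (simp add: kl_term_def trace_Kl_exponent)
qed

section \<open>Sums over a quotient that splits as a product\<close>

lemma quotient_pair_bij_betw:
  assumes r: "equiv A r" and r1: "equiv B1 r1" and r2: "equiv B2 r2"
    and maps: "\<And>x. x \<in> A \<Longrightarrow> f x \<in> B1" "\<And>x. x \<in> A \<Longrightarrow> g x \<in> B2"
    and rel: "\<And>x y. x \<in> A \<Longrightarrow> y \<in> A \<Longrightarrow> (x, y) \<in> r \<longleftrightarrow> (f x, f y) \<in> r1 \<and> (g x, g y) \<in> r2"
    and onto: "\<And>y1 y2. y1 \<in> B1 \<Longrightarrow> y2 \<in> B2 \<Longrightarrow> \<exists>x\<in>A. (y1, f x) \<in> r1 \<and> (y2, g x) \<in> r2"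
  obtains h where "bij_betw h (A//r) (B1//r1 \<times> B2//r2)"
    and "\<And>x. x \<in> A \<Longrightarrow> h (r``{x}) = (r1``{f x}, r2``{g x})"
proof -
  define cls where "cls x = (r1``{f x}, r2``{g x})" for x
  define h where "h X = the_elem (cls ` X)" for X
  have cls_eq_iff: "cls x = cls y \<longleftrightarrow> (x, y) \<in> r" if "x \<in> A" "y \<in> A" for x y
    using that maps rel eq_equiv_class_iff[OF r1] eq_equiv_class_iff[OF r2] by (simp add: cls_def)
  have h_class: "h (r``{x}) = cls x" if x: "x \<in> A" for x
    unfolding h_def
  proof (rule the_elem_image_unique)
    show "r``{x} \<noteq> {}" using equiv_class_self[OF r x] by blast
    show "cls y = cls x" if "y \<in> r``{x}" for y
    proof -
      have "(x, y) \<in> r" using that by simp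
      then have "y \<in> A" "(y, x) \<in> r" using equiv_class_eq_iff[OF r] by metis+
      then show ?thesis using cls_eq_iff x by blast
    qed
  qed
  have "inj_on h (A//r)"
  proof (rule inj_onI)
    fix X Y assume X: "X \<in> A//r" and Y: "Y \<in> A//r" and "h X = h Y"
    obtain x where x: "X = r``{x}" "x \<in> A" using X by (rule quotientE)
    obtain y where y: "Y = r``{y}" "y \<in> A" using Y by (rule quotientE)
    have "(x, y) \<in> r" using \<open>h X = h Y\<close> x y cls_eq_iff by (simp add: h_class)
    then show "X = Y" using x y equiv_class_eq[OF r] by simp
  qed
  moreover have "h ` (A//r) = B1//r1 \<times> B2//r2"
  proof
    show "h ` (A//r) \<subseteq> B1//r1 \<times> B2//r2"
      by (auto elim!: quotientE simp: h_class cls_def maps quotientI)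
    show "B1//r1 \<times> B2//r2 \<subseteq> h ` (A//r)"
    proof (clarify elim!: quotientE)
      fix y1 y2 assume "y1 \<in> B1" "y2 \<in> B2"
      then obtain x where "x \<in> A" "(y1, f x) \<in> r1" "(y2, g x) \<in> r2" using onto by blast
      then have "(r1``{y1}, r2``{y2}) = h (r``{x})"
        by (simp add: h_class cls_def equiv_class_eq[OF r1] equiv_class_eq[OF r2])
      then show "(r1``{y1}, r2``{y2}) \<in> h ` (A//r)" using \<open>x \<in> A\<close> by (auto intro: quotientI)
    qed
  qed
  ultimately have "bij_betw h (A//r) (B1//r1 \<times> B2//r2)" by (rule bij_betw_imageI)
  then show thesis by (rule that) (simp add: h_class cls_def)
qed

lemma sum_quotient_eq_product:
  fixes F :: "'a set \<Rightarrow> 'd::comm_semiring_1"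
  assumes r: "equiv A r" and r1: "equiv B1 r1" and r2: "equiv B2 r2"
    and maps: "\<And>x. x \<in> A \<Longrightarrow> f x \<in> B1" "\<And>x. x \<in> A \<Longrightarrow> g x \<in> B2"
    and rel: "\<And>x y. x \<in> A \<Longrightarrow> y \<in> A \<Longrightarrow> (x, y) \<in> r \<longleftrightarrow> (f x, f y) \<in> r1 \<and> (g x, g y) \<in> r2"
    and onto: "\<And>y1 y2. y1 \<in> B1 \<Longrightarrow> y2 \<in> B2 \<Longrightarrow> \<exists>x\<in>A. (y1, f x) \<in> r1 \<and> (y2, g x) \<in> r2"
    and split: "\<And>x. x \<in> A \<Longrightarrow> F (r``{x}) = G1 (r1``{f x}) * G2 (r2``{g x})"
  shows "(\<Sum>X\<in>A//r. F X) = (\<Sum>Y\<in>B1//r1. G1 Y) * (\<Sum>Z\<in>B2//r2. G2 Z)"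
proof -
  obtain h where bij: "bij_betw h (A//r) (B1//r1 \<times> B2//r2)"
    and h: "\<And>x. x \<in> A \<Longrightarrow> h (r``{x}) = (r1``{f x}, r2``{g x})"
    using quotient_pair_bij_betw[OF r r1 r2 maps rel onto] by blast
  have "(\<Sum>X\<in>A//r. F X) = (\<Sum>X\<in>A//r. G1 (fst (h X)) * G2 (snd (h X)))"
    by (rule sum.cong) (auto elim!: quotientE simp: h split)
  also have "\<dots> = (\<Sum>p\<in>B1//r1 \<times> B2//r2. G1 (fst p) * G2 (snd p))"
    using bij by (rule sum.reindex_bij_betw)
  also have "\<dots> = (\<Sum>Y\<in>B1//r1. G1 Y) * (\<Sum>Z\<in>B2//r2. G2 Z)"
    by (simp add: sum_product sum.cartesian_product case_prod_beta)
  finally show ?thesis .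
qed

lemma bezout_fraction_split:
  fixes n c s t \<alpha> \<beta> :: real
  assumes "n \<noteq> 0" "c \<noteq> 0" "s * n + t * c = 1"
  shows "(\<alpha> + \<beta>) / (n * c) = (t\<^sup>2 * c * \<alpha> + t * \<beta>) / n + (n * s\<^sup>2 * \<alpha> + s * \<beta>) / c + 2 * s * t * \<alpha>"
proof -
  have "(t\<^sup>2 * c * \<alpha> + t * \<beta>) / n + (n * s\<^sup>2 * \<alpha> + s * \<beta>) / c + 2 * s * t * \<alpha>
      = (\<alpha> * (s * n + t * c)\<^sup>2 + \<beta> * (s * n + t * c)) / (n * c)"
    using assms(1,2) by (simp add: field_simps power2_eq_square)
  then show ?thesis by (simp add: assms(3))
qed

section \<open>Splitting the modulus \<open>NC\<close>\<close>

locale bezout_moduli =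
  fixes N s t :: int and C :: imat
  assumes N_nonzero: "N \<noteq> 0" and det_nonzero: "det C \<noteq> 0" and bezout: "s * N + t * det C = 1"
begin

lemma det_NC_nonzero: "det (iscale N C) \<noteq> 0"
  using N_nonzero det_nonzero by (simp add: det_iscale)

lemma symp4_iscaleD:
  assumes "symp4 A B (iscale N C) D"
  shows "transpose A ** C = transpose C ** A" "A ** adjugate C \<in> Lambda" "adjugate C ** D \<in> Lambda"
    "A ** adjugate C ** D = iscale (N * det C) B + transpose (adjugate C)"
    "transpose A ** D = mat 1 + iscale N (transpose C ** B)"
proof -
  note adj = symp4_adjugateD[OF assms det_NC_nonzero]
  have E1: "transpose A ** iscale N C = transpose (iscale N C) ** A"
    and E3: "transpose A ** D - transpose (iscale N C) ** B = mat 1"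
    using assms by (auto simp: symp4_def)
  show "transpose A ** C = transpose C ** A"
    using E1 by (simp add: iscale_cancel[OF N_nonzero])
  show "A ** adjugate C \<in> Lambda" "adjugate C ** D \<in> Lambda"
    using adj(1,2) by (simp_all add: adjugate_iscale Lambda_iscale_cancel[OF N_nonzero])
  have "iscale N (iscale (N * det C) B) = iscale N (A ** adjugate C ** D - transpose (adjugate C))"
    using adj(3) by (simp add: adjugate_iscale det_iscale iscale_diff power2_eq_square mult.assoc)
  then have "iscale (N * det C) B = A ** adjugate C ** D - transpose (adjugate C)"
    by (rule iscale_cancel[OF N_nonzero])
  then show "A ** adjugate C ** D = iscale (N * det C) B + transpose (adjugate C)"
    by (simp add: algebra_simps)
  show "transpose A ** D = mat 1 + iscale N (transpose C ** B)"
    using E3 by (simp add: algebra_simps)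
qed

lemma symp4_split_fst:
  assumes "symp4 A B (iscale N C) D"
  shows "symp4 (transpose A ** C) (iscale (- s) (mat 1) + iscale (t * det C) (transpose C ** B))
    (mat N) (iscale t (adjugate C ** D))"
proof (rule symp4_adjugateI)
  note NC = symp4_iscaleD[OF assms]
  show "det (mat N :: imat) \<noteq> 0" using N_nonzero by (simp add: det_mat_2)
  show "transpose A ** C ** adjugate (mat N) \<in> Lambda"
    using NC(1) by (simp add: adjugate_mat in_Lambda_iff matrix_transpose_mul)
  show "adjugate (mat N) ** iscale t (adjugate C ** D) \<in> Lambda"
    using NC(3) by (simp add: adjugate_mat Lambda_iscale)
  have "transpose A ** C ** (adjugate C ** D) = iscale (det C) (mat 1 + iscale N (transpose C ** B))"
    by (simp add: matrix_mul_assoc mult_adjugate_assoc flip: NC(5))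
  then have "transpose A ** C ** adjugate (mat N) ** iscale t (adjugate C ** D) - transpose (adjugate (mat N))
      = iscale (N * t) (iscale (det C) (mat 1 + iscale N (transpose C ** B))) - mat N"
    by (simp add: adjugate_mat matrix_mul_assoc mult_ac flip: matrix_mul_assoc)
  also have "\<dots> = iscale (det (mat N :: imat)) (iscale (- s) (mat 1) + iscale (t * det C) (transpose C ** B))"
    by (rule mat2_eqI; simp add: mat2_nth det_mat_2 power2_eq_square; use bezout in algebra)
  finally show "iscale (det (mat N :: imat)) (iscale (- s) (mat 1) + iscale (t * det C) (transpose C ** B))
      = transpose A ** C ** adjugate (mat N) ** iscale t (adjugate C ** D) - transpose (adjugate (mat N))"
    by (rule sym)
qed

lemma symp4_split_snd:
  assumes "symp4 A B (iscale N C) D"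
  shows "symp4 (iscale N A) (iscale (s * N * N) B - iscale t (transpose (adjugate C))) C (iscale s D)"
proof (rule symp4_adjugateI[OF det_nonzero])
  note NC = symp4_iscaleD[OF assms]
  show "iscale N A ** adjugate C \<in> Lambda" "adjugate C ** iscale s D \<in> Lambda"
    using NC(2,3) by (simp_all add: Lambda_iscale)
  have "iscale N A ** adjugate C ** iscale s D - transpose (adjugate C)
      = iscale (N * s) (iscale (N * det C) B + transpose (adjugate C)) - transpose (adjugate C)"
    by (simp add: mult.commute flip: NC(4))
  also have "\<dots> = iscale (det C) (iscale (s * N * N) B - iscale t (transpose (adjugate C)))"
    by (rule mat2_eqI; simp add: mat2_nth; use bezout in algebra)
  finally show "iscale (det C) (iscale (s * N * N) B - iscale t (transpose (adjugate C)))
      = iscale N A ** adjugate C ** iscale s D - transpose (adjugate C)"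
    by (rule sym)
qed

lemma split_in_Dset:
  assumes "D \<in> Dset (iscale N C)"
  shows "iscale t (adjugate C ** D) \<in> Dset (mat N)" "iscale s D \<in> Dset C"
proof -
  obtain A B where "symp4 A B (iscale N C) D" using assms by (auto simp: Dset_def)
  from symp4_split_fst[OF this] symp4_split_snd[OF this]
  show "iscale t (adjugate C ** D) \<in> Dset (mat N)" "iscale s D \<in> Dset C"
    by (auto simp: Dset_def)
qed

lemma Drel_split_iff:
  assumes D: "D \<in> Dset (iscale N C)" and D': "D' \<in> Dset (iscale N C)"
  shows "(D, D') \<in> Drel (iscale N C) \<longleftrightarrow>
    (iscale t (adjugate C ** D), iscale t (adjugate C ** D')) \<in> Drel (mat N) \<and>
    (iscale s D, iscale s D') \<in> Drel C"
proof
  assume "(D, D') \<in> Drel (iscale N C)"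
  then obtain S where S: "S \<in> Lambda" "D' = D + iscale N C ** S"
    by (auto simp: Drel_def)
  have "iscale t (adjugate C ** D') = iscale t (adjugate C ** D) + mat N ** iscale (t * det C) S"
    by (simp add: S(2) matrix_add_ldistrib iscale_add matrix_mul_assoc adjugate_mult mult_ac)
  moreover have "iscale s D' = iscale s D + C ** iscale (s * N) S"
    by (simp add: S(2) iscale_add mult_ac)
  ultimately show "(iscale t (adjugate C ** D), iscale t (adjugate C ** D')) \<in> Drel (mat N) \<and>
      (iscale s D, iscale s D') \<in> Drel C"
    using split_in_Dset[OF D] split_in_Dset[OF D'] Lambda_iscale[OF S(1)] by (blast intro: DrelI)
next
  assume "(iscale t (adjugate C ** D), iscale t (adjugate C ** D')) \<in> Drel (mat N) \<and>
      (iscale s D, iscale s D') \<in> Drel C"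
  then obtain S1 S2 where S1: "S1 \<in> Lambda" "iscale t (adjugate C ** D') = iscale t (adjugate C ** D) + mat N ** S1"
    and S2: "S2 \<in> Lambda" "iscale s D' = iscale s D + C ** S2"
    by (auto simp: Drel_def)
  have NS1: "iscale N S1 = iscale t (adjugate C ** (D' - D))"
    using S1(2) by (simp add: matrix_diff_ldistrib iscale_diff)
  have CS2: "C ** S2 = iscale s (D' - D)"
    using S2(2) by (simp add: iscale_diff)
  have "iscale N C ** (S1 + S2) = C ** iscale N S1 + iscale N (C ** S2)"
    by (simp add: matrix_add_ldistrib)
  also have "\<dots> = iscale (s * N + t * det C) (D' - D)"
    unfolding NS1 CS2 by (simp add: matrix_mul_assoc matrix_mult_adjugate iscale_add_left mult_ac add_ac)
  finally have "D' = D + iscale N C ** (S1 + S2)" by (simp add: bezout)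
  then show "(D, D') \<in> Drel (iscale N C)"
    using D D' S1(1) S2(1) by (auto simp: Drel_def Lambda_add)
qed

lemma combine_in_Dset:
  assumes "D1 \<in> Dset (mat N)" "D2 \<in> Dset C"
  shows "iscale N D2 + C ** D1 \<in> Dset (iscale N C)"
proof -
  let ?J = "adjugate C" and ?c = "det C"
  obtain A1 B1 where m1: "symp4 A1 B1 (mat N) D1" using assms(1) by (auto simp: Dset_def)
  obtain A2 B2 where m2: "symp4 A2 B2 C D2" using assms(2) by (auto simp: Dset_def)
  note l1 = symp4_matD[OF m1 N_nonzero] and l2 = symp4_adjugateD[OF m2 det_nonzero]
  \<comment> \<open>\<open>A\<close> glues the completions \<open>A\<^sub>2\<close> and \<open>J\<^sup>TA\<^sub>1\<close> with the weights \<open>s\<^sup>2N\<close> and \<open>t\<^sup>2c\<close>;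
    \<open>B\<close> is then forced by \<open>symp4_adjugateI\<close>.\<close>
  define A where "A = iscale (s * s * N) A2 + iscale (t * t * ?c) (transpose ?J ** A1)"
  define B where "B = iscale (s * s * N) B2 + iscale (s * s) (A2 ** D1)
      + iscale (t * t) (transpose ?J ** A1 ** ?J ** D2) + iscale (t * t * ?c) (transpose ?J ** B1)
      - iscale (2 * s * t) (transpose ?J)"
  define D where "D = iscale N D2 + C ** D1"
  have A2JD2: "A2 ** ?J ** D2 = iscale ?c B2 + transpose ?J"
    using l2(3) by simp
  have AJ: "A ** ?J = iscale (s * s * N) (A2 ** ?J) + iscale (t * t * ?c) (transpose ?J ** A1 ** ?J)"
    by (simp add: A_def matrix_add_rdistrib)
  have JD: "?J ** D = iscale N (?J ** D2) + iscale ?c D1"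
    by (simp add: D_def matrix_add_ldistrib matrix_mul_assoc adjugate_mult)
  have "A ** ?J ** D = iscale (s * s * N * N) (A2 ** ?J ** D2) + iscale (s * s * N * ?c) (A2 ** D1)
      + iscale (t * t * ?c * N) (transpose ?J ** A1 ** ?J ** D2)
      + iscale (t * t * ?c * ?c) (transpose ?J ** (A1 ** D1))"
    by (simp add: A_def D_def matrix_add_ldistrib matrix_add_rdistrib matrix_mul_assoc
        adjugate_mult_assoc iscale_add mult_ac add_ac)
  also have "\<dots> = iscale (N * ?c) B + transpose ?J"
    unfolding B_def l1(3) A2JD2
    by (rule mat2_eqI; simp add: mat2_nth; use bezout in algebra)
  finally have AJD: "A ** ?J ** D = iscale (N * ?c) B + transpose ?J" .
  have "symp4 A B (iscale N C) D"
  proof (rule symp4_adjugateI[OF det_NC_nonzero])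
    show "A ** adjugate (iscale N C) \<in> Lambda"
      using l2(1) Lambda_congruence[OF l1(1)]
      by (simp add: adjugate_iscale AJ Lambda_iscale Lambda_add)
    show "adjugate (iscale N C) ** D \<in> Lambda"
      using l2(2) l1(2) by (simp add: adjugate_iscale JD Lambda_iscale Lambda_add)
    show "iscale (det (iscale N C)) B = A ** adjugate (iscale N C) ** D - transpose (adjugate (iscale N C))"
      by (simp add: det_iscale adjugate_iscale AJD iscale_add power2_eq_square mult_ac)
  qed
  then show ?thesis by (auto simp: Dset_def D_def)
qed

lemma Drel_combine:
  assumes "D1 \<in> Dset (mat N)" "D2 \<in> Dset C"
  shows "(D1, iscale t (adjugate C ** (iscale N D2 + C ** D1))) \<in> Drel (mat N)"
    "(D2, iscale s (iscale N D2 + C ** D1)) \<in> Drel C"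
proof -
  let ?J = "adjugate C" and ?D = "iscale N D2 + C ** D1"
  obtain A1 B1 where "symp4 A1 B1 (mat N) D1" using assms(1) by (auto simp: Dset_def)
  then have "D1 \<in> Lambda" using N_nonzero by (rule symp4_matD)
  moreover obtain A2 B2 where "symp4 A2 B2 C D2" using assms(2) by (auto simp: Dset_def)
  then have "?J ** D2 \<in> Lambda" using det_nonzero by (rule symp4_adjugateD)
  ultimately have S: "iscale t (?J ** D2) - iscale s D1 \<in> Lambda" "iscale s D1 - iscale t (?J ** D2) \<in> Lambda"
    by (simp_all add: Lambda_diff Lambda_iscale)
  have "iscale t (?J ** ?D) = iscale (t * N) (?J ** D2) + iscale (t * det C) D1"
    by (simp add: matrix_add_ldistrib iscale_add matrix_mul_assoc adjugate_mult)
  also have "\<dots> = D1 + mat N ** (iscale t (?J ** D2) - iscale s D1)"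
    by (rule mat2_eqI; simp add: mat2_nth; use bezout in algebra)
  finally have fst: "iscale t (?J ** ?D) = D1 + mat N ** (iscale t (?J ** D2) - iscale s D1)" .
  have "D2 + C ** (iscale s D1 - iscale t (?J ** D2)) = D2 + iscale s (C ** D1) - iscale (t * det C) D2"
    by (simp add: matrix_diff_ldistrib matrix_mul_assoc matrix_mult_adjugate)
  also have "\<dots> = iscale s ?D"
    by (rule mat2_eqI; simp add: mat2_nth; use bezout in algebra)
  finally have snd: "iscale s ?D = D2 + C ** (iscale s D1 - iscale t (?J ** D2))" by (rule sym)
  have "?D \<in> Dset (iscale N C)" using assms by (rule combine_in_Dset)
  note split = split_in_Dset[OF this]
  show "(D1, iscale t (?J ** ?D)) \<in> Drel (mat N)" by (rule DrelI[OF assms(1) split(1) S(1) fst])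
  show "(D2, iscale s ?D) \<in> Drel C" by (rule DrelI[OF assms(2) split(2) S(2) snd])
qed

lemma kl_term_split:
  assumes "symp4 A B (iscale N C) D" "Q \<in> Lambda_dual"
  shows "kl_term Q T (iscale N C) A D =
    kl_term (rmat (iscale t (adjugate C)) ** Q ** transpose (rmat (iscale t (adjugate C)))) T (mat N)
      (transpose A ** C) (iscale t (adjugate C ** D))
    * kl_term ((real_of_int s)\<^sup>2 *\<^sub>R Q) T C (iscale N A) (iscale s D)"
proof -
  let ?J = "adjugate C" and ?c = "det C"
  note NC = symp4_iscaleD[OF assms(1)]
  define \<alpha> where "\<alpha> = trace_pairing (A ** ?J) Q"
  define \<beta> where "\<beta> = trace_pairing (?J ** D) T"
  have "\<alpha> \<in> \<int>" using assms(2) NC(2) by (simp add: Lambda_dual_def \<alpha>_def)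
  have bezout_real: "real_of_int s * of_int N + of_int t * of_int ?c = 1"
    using bezout by (metis of_int_1 of_int_add of_int_mult)
  have "transpose ?J ** (transpose A ** C) ** ?J = iscale ?c (A ** ?J)"
    using NC(2) by (simp add: mult_in_Lambda_iff matrix_mul_assoc adjugate_mult_assoc)
  then have "trace_pairing (transpose ?J ** (transpose A ** C) ** ?J) Q = of_int ?c * \<alpha>"
    by (simp add: trace_pairing_iscale \<alpha>_def)
  then have fst: "kl_term (rmat (iscale t ?J) ** Q ** transpose (rmat (iscale t ?J))) T (mat N)
      (transpose A ** C) (iscale t (?J ** D)) = e (((real_of_int t)\<^sup>2 * of_int ?c * \<alpha> + of_int t * \<beta>) / of_int N)"
    unfolding kl_term_def using N_nonzero
    by (intro arg_cong[where f = e]) (simp add: adjugate_mat det_mat_2 trace_pairing_congruence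
        trace_pairing_iscale \<beta>_def power2_eq_square field_simps)
  have snd: "kl_term ((real_of_int s)\<^sup>2 *\<^sub>R Q) T C (iscale N A) (iscale s D)
      = e ((of_int N * (real_of_int s)\<^sup>2 * \<alpha> + of_int s * \<beta>) / of_int ?c)"
    by (simp add: kl_term_def trace_pairing_iscale trace_pairing_scaleR \<alpha>_def \<beta>_def mult_ac)
  have "kl_term Q T (iscale N C) A D = e ((\<alpha> + \<beta>) / (of_int N * of_int ?c))"
    unfolding kl_term_def using N_nonzero det_nonzero
    by (intro arg_cong[where f = e]) (simp add: adjugate_iscale det_iscale trace_pairing_iscale
        \<alpha>_def \<beta>_def power2_eq_square field_simps)
  also have "\<dots> = e (((real_of_int t)\<^sup>2 * of_int ?c * \<alpha> + of_int t * \<beta>) / of_int N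
      + (of_int N * (real_of_int s)\<^sup>2 * \<alpha> + of_int s * \<beta>) / of_int ?c + 2 * of_int s * of_int t * \<alpha>)"
    using N_nonzero det_nonzero bezout_real by (intro arg_cong[where f = e] bezout_fraction_split) simp_all
  also have "\<dots> = e (((real_of_int t)\<^sup>2 * of_int ?c * \<alpha> + of_int t * \<beta>) / of_int N
      + (of_int N * (real_of_int s)\<^sup>2 * \<alpha> + of_int s * \<beta>) / of_int ?c)"
    using \<open>\<alpha> \<in> \<int>\<close> by (intro e_add_Ints Ints_mult) simp_all
  finally show ?thesis by (simp add: fst snd e_add)
qed

lemma kl_class_term_split:
  assumes "D \<in> Dset (iscale N C)" "Q \<in> Lambda_dual" "T \<in> Lambda_dual"
  shows "kl_class_term Q T (iscale N C) (Drel (iscale N C) `` {D}) =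
    kl_class_term (rmat (iscale t (adjugate C)) ** Q ** transpose (rmat (iscale t (adjugate C)))) T (mat N)
      (Drel (mat N) `` {iscale t (adjugate C ** D)})
    * kl_class_term ((real_of_int s)\<^sup>2 *\<^sub>R Q) T C (Drel C `` {iscale s D})"
proof -
  obtain A B where m: "symp4 A B (iscale N C) D" using assms(1) by (auto simp: Dset_def)
  have dN: "det (mat N :: imat) \<noteq> 0" using N_nonzero by (simp add: det_mat_2)
  have Q1: "rmat (iscale t (adjugate C)) ** Q ** transpose (rmat (iscale t (adjugate C))) \<in> Lambda_dual"
    using assms(2) by (rule Lambda_dual_congruence)
  have Q2: "(real_of_int s)\<^sup>2 *\<^sub>R Q \<in> Lambda_dual"
    using assms(2) by (simp add: Lambda_dual_scaleR)
  show ?thesis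
    using kl_class_term_eq[OF det_NC_nonzero assms(2,3) m] kl_term_split[OF m assms(2)]
      kl_class_term_eq[OF dN Q1 assms(3) symp4_split_fst[OF m]]
      kl_class_term_eq[OF det_nonzero Q2 assms(3) symp4_split_snd[OF m]]
    by simp
qed

end

theorem lemma6:
  fixes N s t :: int and C :: imat and Q T :: rmat
  assumes "prime N" and "N mod 4 = 3"
    and "det C \<noteq> 0" and "coprime (det C) N"
    and "s * N + t * det C = 1"
    and "Q \<in> Sset" and "T \<in> Sset"
  shows "let X = (real_of_int (t * det C)) *\<^sub>R matrix_inv (rmat C) in
    Kl Q T (iscale N C) =
      Kl (X ** Q ** transpose X) T (mat N) * Kl ((real_of_int s)^2 *\<^sub>R Q) T C"
proof -
  interpret bezout_moduli N s t C
    using assms(1,3,5) by unfold_locales auto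
  have X: "real_of_int (t * det C) *\<^sub>R matrix_inv (rmat C) = rmat (iscale t (adjugate C))"
    using det_nonzero by (simp add: matrix_inv_rmat rmat_iscale)
  have Q: "Q \<in> Lambda_dual" and T: "T \<in> Lambda_dual"
    using assms(6,7) Sset_subset_Lambda_dual by auto
  show ?thesis
    unfolding Let_def X Kl_eq_sum_kl_class_term
  proof (rule sum_quotient_eq_product[OF equiv_Drel equiv_Drel equiv_Drel,
        where f = "\<lambda>D. iscale t (adjugate C ** D)" and g = "iscale s"])
    show "\<exists>D\<in>Dset (iscale N C). (D1, iscale t (adjugate C ** D)) \<in> Drel (mat N) \<and> (D2, iscale s D) \<in> Drel C"
      if "D1 \<in> Dset (mat N)" "D2 \<in> Dset C" for D1 D2
      using combine_in_Dset[OF that] Drel_combine[OF that] by blast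
  qed (simp_all add: split_in_Dset Drel_split_iff kl_class_term_split Q T)
qed

end
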